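(* Let $G$ be a compact group with normalized Haar measure $dg$ and let $V$ be a finite-dimensional unitary complex representation of $G$ which decomposes as $V\cong\bigoplus_{\ell=1}^L V_\ell^{\oplus R_\ell}$, where $V_1,\ldots,V_L$ are pairwise non-isomorphic irreducible representations with $\dim V_\ell=N_\ell$. Fix, for each $\ell$, an orthonormal basis of $V_\ell$, and a $G$-equivariant unitary isomorphism of $V$ with $\bigoplus_\ell V_\ell^{\oplus R_\ell}$, so that each $f\in V$ is represented by an $L$-tuple $(A_1,\ldots,A_L)$, where $A_\ell$ is the complex $N_\ell\times R_\ell$ matrix whose $i$-th column is the coordinate vector of the component of $f$ in the $i$-th copy of $V_\ell$. Let $H=\prod_{\ell=1}^L U(N_\ell)$ act on $V$ by $(U_1,\ldots,U_L)\cdot(A_1,\ldots,A_L)=(U_1A_1,\ldots,U_LA_L)$. For $f\in V$ define the second moment $m^2_f=\int_G (g\cdot f)(g\cdot f)^*\,dg$ (with respect to an orthonormal basis of $V$). Then for $f,f'\in V$, $m^2_f=m^2_{f'}$ if and only if $f=h\cdot f'$ for some $h\in H$.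
   Context: Every finite-dimensional representation of a compact group is unitary and decomposes as a direct sum of irreducible representations; $V_\ell^{\oplus R_\ell}$ denotes the direct sum of $R_\ell$ copies of $V_\ell$. $U(n)$ denotes the group of $n\times n$ unitary matrices. *)

theory Defs
  imports "HOL-Probability.Probability" "Jordan_Normal_Form.Schur_Decomposition"
begin

text \<open>The compact group G is a type 'g of class topological_group_add (group law written
  additively, not assumed commutative) and t2_space, with compact (UNIV :: 'g set).\<close>

definition normalized_haar :: "'g::topological_group_add measure \<Rightarrow> bool" where
  "normalized_haar M \<longleftrightarrow> prob_space M \<and> sets M = sets borel \<and>
     (\<forall>g. \<forall>A\<in>sets M. emeasure M ((\<lambda>x. g + x) ` A) = emeasure M A)"

definition unitary_mat :: "nat \<Rightarrow> complex mat \<Rightarrow> bool" where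
  "unitary_mat n U \<longleftrightarrow> U \<in> carrier_mat n n \<and> mat_adjoint U * U = 1\<^sub>m n"

definition unitary_rep :: "nat \<Rightarrow> ('g::topological_group_add \<Rightarrow> complex mat) \<Rightarrow> bool" where
  "unitary_rep n \<rho> \<longleftrightarrow> (\<forall>g. unitary_mat n (\<rho> g)) \<and>
     (\<forall>g h. \<rho> (g + h) = \<rho> g * \<rho> h) \<and>
     (\<forall>i<n. \<forall>j<n. continuous_on UNIV (\<lambda>g. \<rho> g $$ (i, j)))"

definition invariant_subspace :: "nat \<Rightarrow> ('g \<Rightarrow> complex mat) \<Rightarrow> complex vec set \<Rightarrow> bool" where
  "invariant_subspace n \<rho> W \<longleftrightarrow> W \<subseteq> carrier_vec n \<and> 0\<^sub>v n \<in> W \<and>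
     (\<forall>v\<in>W. \<forall>w\<in>W. v + w \<in> W) \<and> (\<forall>c. \<forall>v\<in>W. c \<cdot>\<^sub>v v \<in> W) \<and>
     (\<forall>g. \<forall>v\<in>W. \<rho> g *\<^sub>v v \<in> W)"

definition irreducible_rep :: "nat \<Rightarrow> ('g::topological_group_add \<Rightarrow> complex mat) \<Rightarrow> bool" where
  "irreducible_rep n \<rho> \<longleftrightarrow> unitary_rep n \<rho> \<and> n > 0 \<and>
     (\<forall>W. invariant_subspace n \<rho> W \<longrightarrow> W = {0\<^sub>v n} \<or> W = carrier_vec n)"

definition rep_isomorphic :: "nat \<Rightarrow> ('g \<Rightarrow> complex mat) \<Rightarrow> nat \<Rightarrow> ('g \<Rightarrow> complex mat) \<Rightarrow> bool" where
  "rep_isomorphic n \<rho> n' \<rho>' \<longleftrightarrow> (\<exists>T T'. T \<in> carrier_mat n' n \<and> T' \<in> carrier_mat n n' \<and>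
     T * T' = 1\<^sub>m n' \<and> T' * T = 1\<^sub>m n \<and> (\<forall>g. T * \<rho> g = \<rho>' g * T))"

text \<open>An element f of V = (+)_l V_l^(R_l) is an L-tuple (A_1,...,A_L), A_l an N_l x R_l matrix.
  Its coordinates in the orthonormal basis of V indexed by triples (l,i,r) are A_l[i,r].\<close>
definition V_index :: "nat \<Rightarrow> (nat \<Rightarrow> nat) \<Rightarrow> (nat \<Rightarrow> nat) \<Rightarrow> (nat \<times> nat \<times> nat) set" where
  "V_index L N R = {(l, i, r). l < L \<and> i < N l \<and> r < R l}"

definition in_V :: "nat \<Rightarrow> (nat \<Rightarrow> nat) \<Rightarrow> (nat \<Rightarrow> nat) \<Rightarrow> (nat \<Rightarrow> complex mat) \<Rightarrow> bool" where
  "in_V L N R A \<longleftrightarrow> (\<forall>l<L. A l \<in> carrier_mat (N l) (R l))"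

definition coord :: "(nat \<Rightarrow> complex mat) \<Rightarrow> nat \<times> nat \<times> nat \<Rightarrow> complex" where
  "coord A p = (case p of (l, i, r) \<Rightarrow> A l $$ (i, r))"

definition G_act :: "(nat \<Rightarrow> 'g \<Rightarrow> complex mat) \<Rightarrow> 'g \<Rightarrow> (nat \<Rightarrow> complex mat) \<Rightarrow> (nat \<Rightarrow> complex mat)" where
  "G_act \<rho> g A = (\<lambda>l. \<rho> l g * A l)"

definition second_moment ::
  "nat \<Rightarrow> (nat \<Rightarrow> nat) \<Rightarrow> (nat \<Rightarrow> nat) \<Rightarrow> (nat \<Rightarrow> 'g \<Rightarrow> complex mat) \<Rightarrow> 'g measure
    \<Rightarrow> (nat \<Rightarrow> complex mat) \<Rightarrow> (nat \<times> nat \<times> nat) \<times> (nat \<times> nat \<times> nat) \<Rightarrow> complex" where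
  "second_moment L N R \<rho> M A = (\<lambda>(p, q).
     if p \<in> V_index L N R \<and> q \<in> V_index L N R
     then (\<integral>g. coord (G_act \<rho> g A) p * cnj (coord (G_act \<rho> g A) q) \<partial>M)
     else 0)"

definition H_related :: "nat \<Rightarrow> (nat \<Rightarrow> nat) \<Rightarrow> (nat \<Rightarrow> complex mat) \<Rightarrow> (nat \<Rightarrow> complex mat) \<Rightarrow> bool" where
  "H_related L N A A' \<longleftrightarrow> (\<exists>U. (\<forall>l<L. unitary_mat (N l) (U l)) \<and> (\<forall>l<L. A l = U l * A' l))"

end

theory Submission
  imports Defs "Jordan_Normal_Form.Spectral_Radius"
begin

text \<open>Expanding (g.f)(g.f)^* entrywise, the
  second moment becomes a linear combination of the Haar integrals of rho_l(g)_ia conj(rho_k(g)_jb).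
  Averaging over the group produces intertwiners, so Schur's lemma makes these integrals vanish
  unless l = k and i = j, in which case they equal delta_ab / N_l. Hence m^2_f is block diagonal
  and records exactly the Gram matrices A_l^* A_l. Finally, two matrices of the same size have the
  same Gram matrix iff they differ by a unitary factor on the left.\<close>

unbundle no vec_syntax

lemma mat_adjoint_altdef:
  "mat_adjoint (A::complex mat) = mat (dim_col A) (dim_row A) (\<lambda>(i,j). cnj (A $$ (j,i)))"
  by (rule eq_matI) (simp_all add: mat_adjoint_def mat_of_rows_def)

lemma dim_mat_adjoint [simp]:
  "dim_row (mat_adjoint (A::complex mat)) = dim_col A"
  "dim_col (mat_adjoint (A::complex mat)) = dim_row A"
  by (simp_all add: mat_adjoint_altdef)

lemma index_mat_adjoint [simp]:
  "i < dim_col A \<Longrightarrow> j < dim_row A \<Longrightarrow> mat_adjoint (A::complex mat) $$ (i,j) = cnj (A $$ (j,i))"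
  by (simp add: mat_adjoint_altdef)

lemma mat_adjoint_carrier [simp]:
  "(A::complex mat) \<in> carrier_mat n m \<Longrightarrow> mat_adjoint A \<in> carrier_mat m n"
  by (rule carrier_matI) (simp_all add: carrier_matD)

lemma mat_adjoint_adjoint [simp]: "mat_adjoint (mat_adjoint (A::complex mat)) = A"
  by (rule eq_matI) auto

lemma mat_adjoint_mult:
  assumes "(A::complex mat) \<in> carrier_mat n m" "B \<in> carrier_mat m k"
  shows "mat_adjoint (A * B) = mat_adjoint B * mat_adjoint A"
proof (rule eq_matI)
  fix i j assume "i < dim_row (mat_adjoint B * mat_adjoint A)" "j < dim_col (mat_adjoint B * mat_adjoint A)"
  then have i: "i < k" and j: "j < n" using assms by auto
  have "mat_adjoint (A * B) $$ (i,j) = cnj (\<Sum>l\<in>{0..<m}. A $$ (j,l) * B $$ (l,i))"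
    using i j assms by (simp add: scalar_prod_def)
  also have "\<dots> = (\<Sum>l\<in>{0..<m}. cnj (B $$ (l,i)) * cnj (A $$ (j,l)))"
    by (simp add: mult.commute)
  also have "\<dots> = (mat_adjoint B * mat_adjoint A) $$ (i,j)"
    using i j assms by (simp add: scalar_prod_def)
  finally show "mat_adjoint (A * B) $$ (i,j) = (mat_adjoint B * mat_adjoint A) $$ (i,j)" .
qed (use assms in auto)

lemma mat_adjoint_one [simp]: "mat_adjoint (1\<^sub>m n :: complex mat) = 1\<^sub>m n"
  by (rule eq_matI) auto

lemma mat_adjoint_smult: "mat_adjoint (c \<cdot>\<^sub>m (A::complex mat)) = cnj c \<cdot>\<^sub>m mat_adjoint A"
  by (rule eq_matI) auto

lemma index_gram_mat:
  "A \<in> carrier_mat n m \<Longrightarrow> r < m \<Longrightarrow> s < m \<Longrightarrow>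
   (mat_adjoint A * A) $$ (r,s) = (\<Sum>l\<in>{0..<n}. cnj (A $$ (l,r)) * A $$ (l,s))"
  by (simp add: scalar_prod_def)

lemma sum_cnj_mult_self: "(\<Sum>l\<in>S. cnj (f l) * f l) = of_real (\<Sum>l\<in>S. (cmod (f l))\<^sup>2)"
  unfolding of_real_sum by (rule sum.cong) (simp_all only: complex_norm_square mult.commute)

lemma sum_cnj_mult_self_eq_0_iff:
  assumes "finite S"
  shows "(\<Sum>l\<in>S. cnj (f l) * f l) = 0 \<longleftrightarrow> (\<forall>l\<in>S. f l = 0)"
  using assms unfolding sum_cnj_mult_self of_real_eq_0_iff by (simp add: sum_nonneg_eq_0_iff)

lemma sum_cnj_mult_self_vec_nonzero:
  assumes "w \<in> carrier_vec n" "w \<noteq> 0\<^sub>v n"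
  shows "(\<Sum>l<n. cnj (w$l) * w$l) \<noteq> 0"
proof -
  obtain i where "i < n" "w $ i \<noteq> 0" using assms by (metis carrier_vecD eq_vecI index_zero_vec)
  then show ?thesis by (subst sum_cnj_mult_self_eq_0_iff) auto
qed

lemma gram_mat_diag_eq_0_imp_zero:
  assumes T: "(T::complex mat) \<in> carrier_mat n1 n2"
    and diag: "\<And>j. j < n2 \<Longrightarrow> (mat_adjoint T * T) $$ (j,j) = 0"
  shows "T = 0\<^sub>m n1 n2"
proof (rule eq_matI)
  fix i j assume "i < dim_row (0\<^sub>m n1 n2 :: complex mat)" "j < dim_col (0\<^sub>m n1 n2 :: complex mat)"
  then have i: "i < n1" and j: "j < n2" by auto
  have "\<forall>l\<in>{0..<n1}. T $$ (l,j) = 0"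
    using diag[OF j] by (simp add: index_gram_mat[OF T j j] sum_cnj_mult_self_eq_0_iff)
  then show "T $$ (i,j) = 0\<^sub>m n1 n2 $$ (i,j)" using i j by simp
qed (use T in auto)

lemma unitary_mat_carrier: "unitary_mat n U \<Longrightarrow> U \<in> carrier_mat n n"
  by (simp add: unitary_mat_def)

lemma unitary_mat_adjoint_mult: "unitary_mat n U \<Longrightarrow> mat_adjoint U * U = 1\<^sub>m n"
  by (simp add: unitary_mat_def)

lemma unitary_mat_mult_adjoint: "unitary_mat n U \<Longrightarrow> U * mat_adjoint U = 1\<^sub>m n"
  unfolding unitary_mat_def by (metis mat_adjoint_carrier mat_mult_left_right_inverse)

lemma unitary_mat_adjoint: "unitary_mat n U \<Longrightarrow> unitary_mat n (mat_adjoint U)"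
  using unitary_mat_mult_adjoint unfolding unitary_mat_def by auto

lemma unitary_mat_one: "unitary_mat n (1\<^sub>m n)"
  unfolding unitary_mat_def by auto

lemma unitary_mat_cancel:
  assumes "unitary_mat n U" "X \<in> carrier_mat n k"
  shows "mat_adjoint U * (U * X) = X" "U * (mat_adjoint U * X) = X"
proof -
  have U: "U \<in> carrier_mat n n" using assms unitary_mat_carrier by auto
  have "mat_adjoint U * (U * X) = (mat_adjoint U * U) * X"
    using U assms(2) by (metis mat_adjoint_carrier assoc_mult_mat)
  then show "mat_adjoint U * (U * X) = X" using unitary_mat_adjoint_mult[OF assms(1)] assms(2) by simp
  have "U * (mat_adjoint U * X) = (U * mat_adjoint U) * X"
    using U assms(2) by (metis mat_adjoint_carrier assoc_mult_mat)
  then show "U * (mat_adjoint U * X) = X" using unitary_mat_mult_adjoint[OF assms(1)] assms(2) by simp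
qed

lemma unitary_mat_mult:
  assumes "unitary_mat n U" "unitary_mat n V"
  shows "unitary_mat n (U * V)"
proof -
  have U: "U \<in> carrier_mat n n" and V: "V \<in> carrier_mat n n" using assms unitary_mat_carrier by auto
  have "mat_adjoint (U * V) * (U * V) = mat_adjoint V * mat_adjoint U * (U * V)"
    using U V by (simp add: mat_adjoint_mult)
  also have "\<dots> = mat_adjoint V * (mat_adjoint U * (U * V))"
    by (rule assoc_mult_mat) (use U V in auto)
  also have "\<dots> = 1\<^sub>m n"
    using unitary_mat_cancel(1)[OF assms(1) V] unitary_mat_adjoint_mult[OF assms(2)] by simp
  finally show ?thesis using U V unfolding unitary_mat_def by auto
qed

lemma unitary_mat_smult_one:
  assumes "cnj \<theta> * \<theta> = 1"
  shows "unitary_mat n (\<theta> \<cdot>\<^sub>m 1\<^sub>m n)"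
proof -
  have "mat_adjoint (\<theta> \<cdot>\<^sub>m 1\<^sub>m n) * (\<theta> \<cdot>\<^sub>m 1\<^sub>m n) = \<theta> \<cdot>\<^sub>m (cnj \<theta> \<cdot>\<^sub>m 1\<^sub>m n)"
    by (simp add: mat_adjoint_smult mult_smult_distrib[of _ n n _ n] mult_smult_assoc_mat[of _ n n _ n])
  also have "\<dots> = 1\<^sub>m n"
    using assms by (intro eq_matI) (auto simp: mult.commute)
  finally show ?thesis unfolding unitary_mat_def by simp
qed

lemma smult_one_mat_mult_vec:
  assumes "x \<in> carrier_vec n"
  shows "(\<theta> \<cdot>\<^sub>m 1\<^sub>m n) *\<^sub>v x = (\<theta>::complex) \<cdot>\<^sub>v x"
proof (rule eq_vecI)
  fix i assume "i < dim_vec (\<theta> \<cdot>\<^sub>v x)"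
  then have i: "i < n" using assms by simp
  have "((\<theta> \<cdot>\<^sub>m 1\<^sub>m n) *\<^sub>v x) $ i = (\<theta> \<cdot>\<^sub>v unit_vec n i) \<bullet> x"
    using i by (simp only: index_mult_mat_vec index_smult_mat index_one_mat(2) row_smult row_one)
  also have "\<dots> = \<theta> * (unit_vec n i \<bullet> x)"
    by (rule smult_scalar_prod_distrib[OF _ assms]) simp
  also have "\<dots> = (\<theta> \<cdot>\<^sub>v x) $ i" using i assms by (simp add: scalar_prod_left_unit)
  finally show "((\<theta> \<cdot>\<^sub>m 1\<^sub>m n) *\<^sub>v x) $ i = (\<theta> \<cdot>\<^sub>v x) $ i" .
qed (use assms in simp)

lemma gram_mat_unitary_mult:
  assumes U: "unitary_mat n U" and A: "A \<in> carrier_mat n m"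
  shows "mat_adjoint (U * A) * (U * A) = mat_adjoint A * A"
proof -
  have Uc: "U \<in> carrier_mat n n" using U unitary_mat_carrier by auto
  have "mat_adjoint (U * A) * (U * A) = (mat_adjoint A * mat_adjoint U) * (U * A)"
    by (simp add: mat_adjoint_mult[OF Uc A])
  also have "\<dots> = mat_adjoint A * (mat_adjoint U * (U * A))"
    by (rule assoc_mult_mat) (use A Uc in auto)
  also have "\<dots> = mat_adjoint A * A" using unitary_mat_cancel(1)[OF U A] by simp
  finally show ?thesis .
qed

subsection \<open>Householder reflections\<close>

lemma delta_mult: "(if P then 1 else 0) * (x::complex) = (if P then x else 0)"
  by simp

definition householder :: "nat \<Rightarrow> complex vec \<Rightarrow> complex mat" where
  "householder n w = mat n n (\<lambda>(i,j). (if i = j then 1 else 0) - (2 / (\<Sum>l<n. cnj (w$l) * w$l)) * w$i * cnj (w$j))"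

lemma householder_unitary:
  assumes "w \<in> carrier_vec n" "w \<noteq> 0\<^sub>v n"
  shows "unitary_mat n (householder n w)"
proof -
  define k where "k = (\<Sum>l<n. cnj (w$l) * w$l)"
  define c where "c = 2 / k"
  have k0: "k \<noteq> 0" using sum_cnj_mult_self_vec_nonzero[OF assms] k_def by simp
  have "cnj k = k" unfolding k_def sum_cnj_mult_self complex_cnj_complex_of_real ..
  then have cr: "cnj c = c" by (simp add: c_def)
  have cck: "c * c * k = 2 * c" using k0 by (simp add: c_def field_simps)
  have H: "householder n w = mat n n (\<lambda>(i,j). (if i = j then 1 else 0) - c * w$i * cnj (w$j))"
    unfolding householder_def c_def k_def ..
  have "(mat_adjoint (householder n w) * householder n w) $$ (i,j) = 1\<^sub>m n $$ (i,j)"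
    if i: "i < n" and j: "j < n" for i j
  proof -
    have "(mat_adjoint (householder n w) * householder n w) $$ (i,j) =
        (\<Sum>l<n. ((if l = i then 1 else 0) - c * cnj (w$l) * w$i) *
          ((if l = j then 1 else 0) - c * w$l * cnj (w$j)))"
      using i j unfolding H
      by (simp add: scalar_prod_def cr lessThan_atLeast0 mult.commute mult.left_commute)
        (intro sum.cong refl; auto)
    also have "\<dots> = (\<Sum>l<n. (if l = i then 1 else 0) * (if l = j then 1 else 0))
        - (\<Sum>l<n. (if l = i then 1 else 0) * (c * w$l * cnj (w$j)))
        - (\<Sum>l<n. (if l = j then 1 else 0) * (c * cnj (w$l) * w$i))
        + (c * c * w$i * cnj (w$j)) * k"
      by (simp add: k_def algebra_simps sum.distrib sum_subtractf sum_distrib_left)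
    also have "\<dots> = (if i = j then 1 else 0) - 2 * c * w$i * cnj (w$j) + (c * c * k) * w$i * cnj (w$j)"
      using i j by (simp only: delta_mult sum.delta finite_lessThan lessThan_iff if_True)
        (simp add: algebra_simps)
    also have "\<dots> = 1\<^sub>m n $$ (i,j)" using i j cck by simp
    finally show ?thesis .
  qed
  then show ?thesis unfolding unitary_mat_def by (auto intro!: eq_matI simp: householder_def)
qed

lemma householder_mult_vec:
  assumes "y \<in> carrier_vec n"
  shows "householder n w *\<^sub>v y =
    y - ((2 / (\<Sum>l<n. cnj (w$l) * w$l)) * (\<Sum>l<n. cnj (w$l) * y$l)) \<cdot>\<^sub>v vec n (\<lambda>i. w$i)"
proof (rule eq_vecI)
  define c where "c = 2 / (\<Sum>l<n. cnj (w$l) * w$l)"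
  fix i assume "i < dim_vec (y - (c * (\<Sum>l<n. cnj (w$l) * y$l)) \<cdot>\<^sub>v vec n (\<lambda>i. w$i))"
  then have i: "i < n" using assms by simp
  have "(householder n w *\<^sub>v y) $ i = (\<Sum>l<n. ((if i = l then 1 else 0) - c * w$i * cnj (w$l)) * y$l)"
    using i assms by (simp add: householder_def c_def scalar_prod_def lessThan_atLeast0)
  also have "\<dots> = (\<Sum>l<n. (if i = l then 1 else 0) * y$l) - (\<Sum>l<n. (c * w$i) * (cnj (w$l) * y$l))"
    by (subst sum_subtractf[symmetric]) (rule sum.cong, auto simp: algebra_simps)
  also have "\<dots> = y$i - c * w$i * (\<Sum>l<n. cnj (w$l) * y$l)"
    using i by (simp add: sum_distrib_left mult.assoc delta_mult)
  also have "\<dots> = (y - (c * (\<Sum>l<n. cnj (w$l) * y$l)) \<cdot>\<^sub>v vec n (\<lambda>i. w$i)) $ i"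
    using i assms by simp
  finally show "(householder n w *\<^sub>v y) $ i =
      (y - (c * (\<Sum>l<n. cnj (w$l) * y$l)) \<cdot>\<^sub>v vec n (\<lambda>i. w$i)) $ i" .
qed (use assms in \<open>auto simp: householder_def\<close>)

lemma minus_vec_neq_zero:
  fixes y v :: "complex vec"
  assumes "y \<in> carrier_vec n" "v \<in> carrier_vec n" "y \<noteq> v"
  shows "y - v \<noteq> 0\<^sub>v n"
proof
  assume "y - v = 0\<^sub>v n"
  have "y $ i = v $ i" if "i < n" for i
  proof -
    have "(y - v) $ i = 0" using \<open>y - v = 0\<^sub>v n\<close> that by simp
    then show ?thesis using that assms(2) by simp
  qed
  then have "y = v" using assms(1,2) by (intro eq_vecI) auto
  then show False using assms(3) by simp
qed

lemma householder_swaps: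
  assumes y: "y \<in> carrier_vec n" and v: "v \<in> carrier_vec n" and "y \<noteq> v"
    and norm: "(\<Sum>l<n. cnj (y$l) * y$l) = (\<Sum>l<n. cnj (v$l) * v$l)"
    and inner_real: "(\<Sum>l<n. cnj (y$l) * v$l) = (\<Sum>l<n. cnj (v$l) * y$l)"
  shows "householder n (y - v) *\<^sub>v y = v"
proof -
  define w where "w = y - v"
  define a where "a = (\<Sum>l<n. cnj (v$l) * v$l)"
  define t where "t = (\<Sum>l<n. cnj (v$l) * y$l)"
  have w: "w \<in> carrier_vec n" using y v by (simp add: w_def)
  have "w \<noteq> 0\<^sub>v n" unfolding w_def by (rule minus_vec_neq_zero[OF y v \<open>y \<noteq> v\<close>])
  have ww: "(\<Sum>l<n. cnj (w$l) * w$l) = 2 * a - 2 * t"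
  proof -
    have "(\<Sum>l<n. cnj (w$l) * w$l) = (\<Sum>l<n. cnj (y$l) * y$l - cnj (y$l) * v$l
        - cnj (v$l) * y$l + cnj (v$l) * v$l)"
      using y v by (intro sum.cong) (auto simp: w_def algebra_simps)
    also have "\<dots> = (\<Sum>l<n. cnj (y$l) * y$l) - (\<Sum>l<n. cnj (y$l) * v$l)
        - (\<Sum>l<n. cnj (v$l) * y$l) + (\<Sum>l<n. cnj (v$l) * v$l)"
      by (simp only: sum.distrib sum_subtractf)
    finally show ?thesis using norm inner_real by (simp add: a_def t_def)
  qed
  have wy: "(\<Sum>l<n. cnj (w$l) * y$l) = a - t"
  proof -
    have "(\<Sum>l<n. cnj (w$l) * y$l) = (\<Sum>l<n. cnj (y$l) * y$l - cnj (v$l) * y$l)"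
      using y v by (intro sum.cong) (auto simp: w_def algebra_simps)
    then show ?thesis using norm by (simp add: sum_subtractf a_def t_def)
  qed
  have "2 * a - 2 * t \<noteq> 0"
    using sum_cnj_mult_self_vec_nonzero[OF w \<open>w \<noteq> 0\<^sub>v n\<close>] ww by simp
  then have "householder n w *\<^sub>v y = y - 1 \<cdot>\<^sub>v vec n (\<lambda>i. w$i)"
    unfolding householder_mult_vec[OF y] ww wy by (simp add: field_simps)
  also have "vec n (\<lambda>i. w$i) = w" using w by auto
  also have "y - 1 \<cdot>\<^sub>v w = v" using y v by (auto simp: w_def)
  finally show ?thesis by (simp add: w_def)
qed

lemma exists_phase:
  fixes s :: complex
  obtains \<theta> where "cnj \<theta> * \<theta> = 1" "\<theta> * s = of_real (cmod s)"
proof (cases "s = 0")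
  case True
  then show ?thesis by (intro that[of 1]) auto
next
  case False
  define \<theta> where "\<theta> = cnj s / of_real (cmod s)"
  have sq: "s * cnj s = (of_real (cmod s))\<^sup>2"
    by (metis complex_norm_square of_real_power)
  have nz: "(of_real (cmod s) :: complex) \<noteq> 0" using False by simp
  have "cnj \<theta> * \<theta> = (s * cnj s) / (of_real (cmod s))\<^sup>2"
    using nz by (simp add: \<theta>_def field_simps power2_eq_square)
  then have "cnj \<theta> * \<theta> = 1" using nz by (simp add: sq)
  moreover have "\<theta> * s = (s * cnj s) / of_real (cmod s)"
    by (simp add: \<theta>_def field_simps)
  then have "\<theta> * s = of_real (cmod s)" using nz by (simp add: sq power2_eq_square)
  ultimately show ?thesis by (rule that)
qed

lemma exists_unitary_mult_vec_eq:
  assumes x: "x \<in> carrier_vec n" and v: "v \<in> carrier_vec n"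
    and norm: "(\<Sum>l<n. cnj (x$l) * x$l) = (\<Sum>l<n. cnj (v$l) * v$l)"
  obtains U where "unitary_mat n U" "U *\<^sub>v x = v"
proof -
  \<comment> \<open>A phase makes the inner product of v and y = \<theta> x real, as the reflection requires.\<close>
  obtain \<theta> where \<theta>: "cnj \<theta> * \<theta> = 1"
    "\<theta> * (\<Sum>l<n. cnj (v$l) * x$l) = of_real (cmod (\<Sum>l<n. cnj (v$l) * x$l))"
    by (rule exists_phase)
  define y where "y = \<theta> \<cdot>\<^sub>v x"
  have y: "y \<in> carrier_vec n" using x by (simp add: y_def)
  have \<theta>x: "(\<theta> \<cdot>\<^sub>m 1\<^sub>m n) *\<^sub>v x = y" using x by (simp add: y_def smult_one_mat_mult_vec)
  have \<Theta>: "unitary_mat n (\<theta> \<cdot>\<^sub>m 1\<^sub>m n)" using unitary_mat_smult_one[OF \<theta>(1)] .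
  show ?thesis
  proof (cases "y = v")
    case True
    then show ?thesis using that \<Theta> \<theta>x by blast
  next
    case False
    have "(\<Sum>l<n. cnj (y$l) * y$l) = (\<Sum>l<n. (cnj \<theta> * \<theta>) * (cnj (x$l) * x$l))"
      using x by (intro sum.cong) (auto simp: y_def algebra_simps)
    then have yy: "(\<Sum>l<n. cnj (y$l) * y$l) = (\<Sum>l<n. cnj (v$l) * v$l)"
      using \<theta>(1) norm by simp
    have vy: "(\<Sum>l<n. cnj (v$l) * y$l) = of_real (cmod (\<Sum>l<n. cnj (v$l) * x$l))"
      using x \<theta>(2) by (simp add: y_def sum_distrib_left algebra_simps)
    have "(\<Sum>l<n. cnj (y$l) * v$l) = cnj (\<Sum>l<n. cnj (v$l) * y$l)"
      by (simp add: cnj_sum mult.commute)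
    then have yv: "(\<Sum>l<n. cnj (y$l) * v$l) = (\<Sum>l<n. cnj (v$l) * y$l)"
      using vy by simp
    have "(householder n (y - v) * (\<theta> \<cdot>\<^sub>m 1\<^sub>m n)) *\<^sub>v x = householder n (y - v) *\<^sub>v y"
      using x \<theta>x by (subst assoc_mult_mat_vec) (auto simp: householder_def)
    also have "\<dots> = v" by (rule householder_swaps[OF y v False yy yv])
    finally show ?thesis
      using that unitary_mat_mult[OF householder_unitary[OF _ minus_vec_neq_zero[OF y v False]] \<Theta>] y v
      by simp
  qed
qed

subsection \<open>Matrices with the same Gram matrix\<close>

definition block_diag_one :: "nat \<Rightarrow> complex mat \<Rightarrow> complex mat" where
  "block_diag_one n V = mat (Suc n) (Suc n) (\<lambda>(i,k). if i = 0 then of_bool (k = 0)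
      else if k = 0 then 0 else V $$ (i - 1, k - 1))"

definition drop_first_row :: "nat \<Rightarrow> nat \<Rightarrow> complex mat \<Rightarrow> complex mat" where
  "drop_first_row n m X = mat n m (\<lambda>(i,s). X $$ (Suc i, s))"

lemma gram_mat_split_first_row:
  assumes X: "X \<in> carrier_mat (Suc n) m" and r: "r < m" and s: "s < m"
  shows "(mat_adjoint X * X) $$ (r,s) = cnj (X $$ (0,r)) * X $$ (0,s) +
    (mat_adjoint (drop_first_row n m X) * drop_first_row n m X) $$ (r,s)"
proof -
  have "(mat_adjoint X * X) $$ (r,s) = (\<Sum>l\<in>{0..<Suc n}. cnj (X $$ (l,r)) * X $$ (l,s))"
    by (rule index_gram_mat[OF X r s])
  also have "\<dots> = cnj (X $$ (0,r)) * X $$ (0,s) + (\<Sum>l\<in>{0..<n}. cnj (X $$ (Suc l,r)) * X $$ (Suc l,s))"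
    by (simp only: sum.atLeast0_lessThan_Suc_shift comp_def)
  also have "(\<Sum>l\<in>{0..<n}. cnj (X $$ (Suc l,r)) * X $$ (Suc l,s)) =
      (mat_adjoint (drop_first_row n m X) * drop_first_row n m X) $$ (r,s)"
    by (subst index_gram_mat[of _ n m]) (use r s in \<open>auto simp: drop_first_row_def intro!: sum.cong\<close>)
  finally show ?thesis .
qed

lemma unitary_block_diag_one:
  assumes V: "unitary_mat n V"
  shows "unitary_mat (Suc n) (block_diag_one n V)"
proof -
  let ?W = "block_diag_one n V"
  have Vc: "V \<in> carrier_mat n n" using V unitary_mat_carrier by auto
  have "(mat_adjoint ?W * ?W) $$ (i,k) = 1\<^sub>m (Suc n) $$ (i,k)"
    if i: "i < Suc n" and k: "k < Suc n" for i k
  proof -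
    have "(mat_adjoint ?W * ?W) $$ (i,k) = (\<Sum>l\<in>{0..<Suc n}. cnj (?W $$ (l,i)) * ?W $$ (l,k))"
      using i k by (intro index_gram_mat) (simp_all add: block_diag_one_def)
    also have "\<dots> = cnj (?W $$ (0,i)) * ?W $$ (0,k) +
        (\<Sum>l\<in>{0..<n}. cnj (?W $$ (Suc l,i)) * ?W $$ (Suc l,k))"
      by (simp only: sum.atLeast0_lessThan_Suc_shift comp_def)
    also have "\<dots> = 1\<^sub>m (Suc n) $$ (i,k)"
    proof (cases "i = 0 \<or> k = 0")
      case True
      then show ?thesis using i k by (auto simp: block_diag_one_def)
    next
      case False
      have "(\<Sum>l\<in>{0..<n}. cnj (?W $$ (Suc l,i)) * ?W $$ (Suc l,k)) = (mat_adjoint V * V) $$ (i - 1, k - 1)"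
        by (subst index_gram_mat[OF Vc]) (use i k False in \<open>auto simp: block_diag_one_def\<close>)
      moreover have "i - 1 < n" "k - 1 < n" "i - 1 = k - 1 \<longleftrightarrow> i = k" using i k False by auto
      ultimately show ?thesis using False unitary_mat_adjoint_mult[OF V] by (simp add: block_diag_one_def)
    qed
    finally show ?thesis .
  qed
  then show ?thesis unfolding unitary_mat_def by (auto intro!: eq_matI simp: block_diag_one_def)
qed

lemma block_diag_one_mult:
  assumes X: "X \<in> carrier_mat (Suc n) m" and Y: "Y \<in> carrier_mat (Suc n) m"
    and V: "V \<in> carrier_mat n n"
    and first_row: "\<And>s. s < m \<Longrightarrow> X $$ (0,s) = Y $$ (0,s)"
    and lower: "drop_first_row n m X = V * drop_first_row n m Y"
  shows "X = block_diag_one n V * Y"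
proof (rule eq_matI)
  fix i s assume "i < dim_row (block_diag_one n V * Y)" "s < dim_col (block_diag_one n V * Y)"
  then have i: "i < Suc n" and s: "s < m" using Y by (auto simp: block_diag_one_def)
  let ?W = "block_diag_one n V"
  have "(?W * Y) $$ (i,s) = (\<Sum>l\<in>{0..<Suc n}. ?W $$ (i,l) * Y $$ (l,s))"
    using Y i s by (simp add: block_diag_one_def scalar_prod_def)
  also have "\<dots> = ?W $$ (i,0) * Y $$ (0,s) + (\<Sum>l\<in>{0..<n}. ?W $$ (i,Suc l) * Y $$ (Suc l,s))"
    by (simp only: sum.atLeast0_lessThan_Suc_shift comp_def)
  also have "\<dots> = X $$ (i,s)"
  proof (cases i)
    case 0
    then show ?thesis using first_row[OF s] by (simp add: block_diag_one_def)
  next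
    case (Suc i')
    have "(\<Sum>l\<in>{0..<n}. ?W $$ (i,Suc l) * Y $$ (Suc l,s)) = (V * drop_first_row n m Y) $$ (i',s)"
      using i s Suc V by (simp add: block_diag_one_def drop_first_row_def scalar_prod_def)
    also have "\<dots> = X $$ (i,s)"
      unfolding lower[symmetric] using i s Suc by (simp add: drop_first_row_def)
    finally show ?thesis using i Suc by (simp add: block_diag_one_def)
  qed
  finally show "X $$ (i,s) = (?W * Y) $$ (i,s)" by simp
qed (use X Y in \<open>auto simp: block_diag_one_def\<close>)

lemma first_row_eq_if_gram_mat_eq:
  fixes B B' :: "complex mat"
  assumes B: "B \<in> carrier_mat (Suc n) m" and B': "B' \<in> carrier_mat (Suc n) m" and j: "j < m"
    and col: "col B j = c \<cdot>\<^sub>v unit_vec (Suc n) 0" "col B' j = c \<cdot>\<^sub>v unit_vec (Suc n) 0"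
    and "c \<noteq> 0" and gram: "mat_adjoint B * B = mat_adjoint B' * B'" and s: "s < m"
  shows "B $$ (0,s) = B' $$ (0,s)"
proof -
  have gram_row: "(mat_adjoint X * X) $$ (j,s) = cnj c * X $$ (0,s)"
    if X: "X \<in> carrier_mat (Suc n) m" and colX: "col X j = c \<cdot>\<^sub>v unit_vec (Suc n) 0" for X
  proof -
    have Xj: "X $$ (l,j) = (if l = 0 then c else 0)" if "l < Suc n" for l
      using arg_cong[OF colX, of "\<lambda>v. v $ l"] that X j by auto
    have "(mat_adjoint X * X) $$ (j,s) = (\<Sum>l\<in>{0..<Suc n}. cnj (X $$ (l,j)) * X $$ (l,s))"
      by (rule index_gram_mat[OF X j s])
    also have "\<dots> = (\<Sum>l\<in>{0..<Suc n}. if l = 0 then cnj c * X $$ (0,s) else 0)"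
      by (intro sum.cong refl) (simp add: Xj)
    finally show ?thesis by simp
  qed
  show ?thesis
    using gram_row[OF B col(1)] gram_row[OF B' col(2)] gram \<open>c \<noteq> 0\<close> by simp
qed

lemma exists_unitary_col_to_unit_vec:
  assumes A: "A \<in> carrier_mat n m" and j: "j < m" and i: "i < n"
    and c: "cnj c * c = (mat_adjoint A * A) $$ (j,j)"
  obtains P where "unitary_mat n P" "col (mat_adjoint P * A) j = c \<cdot>\<^sub>v unit_vec n i"
proof -
  define e where "e = c \<cdot>\<^sub>v unit_vec n i"
  have e: "e \<in> carrier_vec n" and a: "col A j \<in> carrier_vec n" using A j by (auto simp: e_def)
  have "(\<Sum>l<n. cnj (e$l) * e$l) = (\<Sum>l<n. if l = i then cnj c * c else 0)"
    by (intro sum.cong refl) (auto simp: e_def unit_vec_def)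
  also have "\<dots> = (\<Sum>l<n. cnj (col A j $ l) * col A j $ l)"
    using A i j c by (simp add: index_gram_mat[OF A j j] atLeast0LessThan)
  finally obtain P where P: "unitary_mat n P" "P *\<^sub>v e = col A j"
    using exists_unitary_mult_vec_eq[OF e a] by blast
  have Pc: "P \<in> carrier_mat n n" using P unitary_mat_carrier by auto
  have "col (mat_adjoint P * A) j = mat_adjoint P *\<^sub>v (P *\<^sub>v e)"
    using P(2) by (simp add: col_mult2[OF mat_adjoint_carrier[OF Pc] A j])
  also have "\<dots> = (mat_adjoint P * P) *\<^sub>v e"
    by (rule assoc_mult_mat_vec[symmetric, OF mat_adjoint_carrier[OF Pc] Pc e])
  also have "\<dots> = e" using unitary_mat_adjoint_mult[OF P(1)] e by simp
  finally show ?thesis using that P(1) by (simp add: e_def)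
qed

lemma exists_sqrt_gram_mat_diag:
  assumes "A \<in> carrier_mat n m" "j < m"
  obtains c where "cnj c * c = (mat_adjoint A * A) $$ (j,j)"
proof -
  define S where "S = (\<Sum>l\<in>{0..<n}. (cmod (A $$ (l,j)))\<^sup>2)"
  have "S \<ge> 0" unfolding S_def by (intro sum_nonneg) auto
  then have "cnj (of_real (sqrt S)) * of_real (sqrt S) = (of_real S :: complex)"
    by (simp flip: of_real_mult)
  also have "of_real S = (mat_adjoint A * A) $$ (j,j)"
    unfolding index_gram_mat[OF assms assms(2)] sum_cnj_mult_self S_def ..
  finally show ?thesis by (rule that)
qed

lemma gram_mat_drop_first_row_eq:
  assumes B: "B \<in> carrier_mat (Suc n) m" and B': "B' \<in> carrier_mat (Suc n) m"
    and gram: "mat_adjoint B * B = mat_adjoint B' * B'"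
    and first_row: "\<And>s. s < m \<Longrightarrow> B $$ (0,s) = B' $$ (0,s)"
  shows "mat_adjoint (drop_first_row n m B) * drop_first_row n m B =
    mat_adjoint (drop_first_row n m B') * drop_first_row n m B'"
  using gram_mat_split_first_row[OF B] gram_mat_split_first_row[OF B'] gram first_row
  by (intro eq_matI) (auto simp: drop_first_row_def dest: fun_cong)

lemma exists_unitary_mult_if_adjoint_mult_eq:
  assumes P: "unitary_mat n P" and P': "unitary_mat n P'" and W: "unitary_mat n W"
    and A: "A \<in> carrier_mat n m" and A': "A' \<in> carrier_mat n m"
    and eq: "mat_adjoint P * A = W * (mat_adjoint P' * A')"
  shows "\<exists>U. unitary_mat n U \<and> A = U * A'"
proof (intro exI conjI)
  show "unitary_mat n (P * W * mat_adjoint P')"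
    by (intro unitary_mat_mult unitary_mat_adjoint P P' W)
  have Pc: "P \<in> carrier_mat n n" and P'c: "P' \<in> carrier_mat n n" and Wc: "W \<in> carrier_mat n n"
    using P P' W unitary_mat_carrier by auto
  have "A = P * (W * (mat_adjoint P' * A'))"
    unfolding eq[symmetric] by (rule unitary_mat_cancel(2)[OF P A, symmetric])
  also have "\<dots> = (P * W) * (mat_adjoint P' * A')"
    using Pc Wc P'c A' by (intro assoc_mult_mat[symmetric]) auto
  also have "\<dots> = P * W * mat_adjoint P' * A'"
    using Pc Wc P'c A' by (intro assoc_mult_mat[symmetric]) auto
  finally show "A = P * W * mat_adjoint P' * A'" .
qed

text \<open>Induction on the number of rows: after unitary changes of coordinates (a phase followed by a
  Householder reflection) both matrices have the same nonzero column c e_0, hence the same first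
  row, and their remaining rows again have equal Gram matrices.\<close>

lemma gram_mat_eq_imp_unitary_mult:
  "A \<in> carrier_mat n m \<Longrightarrow> A' \<in> carrier_mat n m \<Longrightarrow> mat_adjoint A * A = mat_adjoint A' * A'
   \<Longrightarrow> \<exists>U. unitary_mat n U \<and> A = U * A'"
proof (induction n arbitrary: A A')
  case 0
  then have "A = 1\<^sub>m 0 * A'" by (intro eq_matI) auto
  then show ?case using unitary_mat_one by blast
next
  case (Suc n)
  note A = Suc.prems(1) and A' = Suc.prems(2) and gram = Suc.prems(3)
  show ?case
  proof (cases "\<forall>j<m. (mat_adjoint A * A) $$ (j,j) = 0")
    case True
    then have "A = 0\<^sub>m (Suc n) m" "A' = 0\<^sub>m (Suc n) m"
      using gram_mat_diag_eq_0_imp_zero[OF A] gram_mat_diag_eq_0_imp_zero[OF A'] gram by auto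
    then have "A = 1\<^sub>m (Suc n) * A'" by simp
    then show ?thesis using unitary_mat_one by blast
  next
    case False
    then obtain j where j: "j < m" and nz: "(mat_adjoint A * A) $$ (j,j) \<noteq> 0" by blast
    obtain c where c: "cnj c * c = (mat_adjoint A * A) $$ (j,j)"
      using exists_sqrt_gram_mat_diag[OF A j] .
    with nz have "c \<noteq> 0" by auto
    obtain P where P: "unitary_mat (Suc n) P" "col (mat_adjoint P * A) j = c \<cdot>\<^sub>v unit_vec (Suc n) 0"
      using exists_unitary_col_to_unit_vec[OF A j _ c] by blast
    obtain P' where P': "unitary_mat (Suc n) P'" "col (mat_adjoint P' * A') j = c \<cdot>\<^sub>v unit_vec (Suc n) 0"
      using exists_unitary_col_to_unit_vec[OF A' j _ c[unfolded gram]] by blast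
    define B where "B = mat_adjoint P * A"
    define B' where "B' = mat_adjoint P' * A'"
    have B: "B \<in> carrier_mat (Suc n) m" and B': "B' \<in> carrier_mat (Suc n) m"
      using unitary_mat_carrier[OF P(1)] unitary_mat_carrier[OF P'(1)] A A'
      by (auto simp: B_def B'_def)
    have gram_B: "mat_adjoint B * B = mat_adjoint B' * B'"
      using gram unfolding B_def B'_def
      by (simp add: gram_mat_unitary_mult[OF unitary_mat_adjoint[OF P(1)] A]
          gram_mat_unitary_mult[OF unitary_mat_adjoint[OF P'(1)] A'])
    have first_row: "B $$ (0,s) = B' $$ (0,s)" if "s < m" for s
      using first_row_eq_if_gram_mat_eq[OF B B' j P(2)[folded B_def] P'(2)[folded B'_def]
          \<open>c \<noteq> 0\<close> gram_B that] .
    obtain V where V: "unitary_mat n V" "drop_first_row n m B = V * drop_first_row n m B'"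
      using Suc.IH[OF _ _ gram_mat_drop_first_row_eq[OF B B' gram_B first_row]]
      by (auto simp: drop_first_row_def)
    have "B = block_diag_one n V * B'"
      by (rule block_diag_one_mult[OF B B' unitary_mat_carrier[OF V(1)] first_row V(2)])
    then show ?thesis
      using exists_unitary_mult_if_adjoint_mult_eq[OF P(1) P'(1) unitary_block_diag_one[OF V(1)] A A']
      by (simp add: B_def B'_def)
  qed
qed

lemma H_related_iff_gram_mat_eq:
  assumes "in_V L N R A" "in_V L N R A'"
  shows "H_related L N A A' \<longleftrightarrow> (\<forall>l<L. mat_adjoint (A l) * A l = mat_adjoint (A' l) * A' l)"
proof
  assume "H_related L N A A'"
  then obtain U where U: "\<forall>l<L. unitary_mat (N l) (U l)" "\<forall>l<L. A l = U l * A' l"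
    unfolding H_related_def by blast
  show "\<forall>l<L. mat_adjoint (A l) * A l = mat_adjoint (A' l) * A' l"
  proof (intro allI impI)
    fix l assume "l < L"
    then show "mat_adjoint (A l) * A l = mat_adjoint (A' l) * A' l"
      using U assms(2) gram_mat_unitary_mult[of "N l" "U l" "A' l" "R l"] unfolding in_V_def by simp
  qed
next
  assume "\<forall>l<L. mat_adjoint (A l) * A l = mat_adjoint (A' l) * A' l"
  then have "\<forall>l. \<exists>U. l < L \<longrightarrow> unitary_mat (N l) U \<and> A l = U * A' l"
    using assms gram_mat_eq_imp_unitary_mult unfolding in_V_def by blast
  then obtain U where "\<forall>l. l < L \<longrightarrow> unitary_mat (N l) (U l) \<and> A l = U l * A' l"
    by (rule choice[THEN exE])
  then show "H_related L N A A'"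
    unfolding H_related_def by blast
qed

subsection \<open>Schur's lemma\<close>

lemma unitary_rep_carrier: "unitary_rep n \<rho> \<Longrightarrow> \<rho> g \<in> carrier_mat n n"
  unfolding unitary_rep_def unitary_mat_def by auto

lemma unitary_rep_unitary: "unitary_rep n \<rho> \<Longrightarrow> unitary_mat n (\<rho> g)"
  unfolding unitary_rep_def by auto

lemma eigenspace_invariant_subspace:
  assumes \<rho>: "\<And>g. \<rho> g \<in> carrier_mat n n" and K: "K \<in> carrier_mat n n"
    and comm: "\<And>g. \<rho> g * K = K * \<rho> g"
  shows "invariant_subspace n \<rho> {u \<in> carrier_vec n. K *\<^sub>v u = \<kappa> \<cdot>\<^sub>v u}"
    (is "invariant_subspace n \<rho> ?W")
  unfolding invariant_subspace_def
proof (intro conjI ballI allI)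
  show "0\<^sub>v n \<in> ?W" using K by auto
next
  fix u w assume "u \<in> ?W" "w \<in> ?W"
  then show "u + w \<in> ?W"
    using K by (simp add: mult_add_distrib_mat_vec smult_add_distrib_vec[of u n w])
next
  fix c u assume "u \<in> ?W"
  then show "c \<cdot>\<^sub>v u \<in> ?W"
    using K by (simp add: mult_mat_vec smult_smult_assoc mult.commute)
next
  fix g u assume "u \<in> ?W"
  then have u: "u \<in> carrier_vec n" "K *\<^sub>v u = \<kappa> \<cdot>\<^sub>v u" by auto
  have "K *\<^sub>v (\<rho> g *\<^sub>v u) = (K * \<rho> g) *\<^sub>v u"
    by (rule assoc_mult_mat_vec[symmetric, OF K \<rho> u(1)])
  also have "\<dots> = \<rho> g *\<^sub>v (K *\<^sub>v u)"
    unfolding comm[symmetric] by (rule assoc_mult_mat_vec[OF \<rho> K u(1)])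
  also have "\<dots> = \<kappa> \<cdot>\<^sub>v (\<rho> g *\<^sub>v u)"
    unfolding u(2) by (rule mult_mat_vec[OF \<rho> u(1)])
  finally show "\<rho> g *\<^sub>v u \<in> ?W" using mult_mat_vec_carrier[OF \<rho> u(1)] by simp
qed auto

lemma schur_lemma_scalar:
  assumes irr: "irreducible_rep n \<rho>" and K: "K \<in> carrier_mat n n"
    and comm: "\<And>g. \<rho> g * K = K * \<rho> g"
  obtains \<kappa> where "K = \<kappa> \<cdot>\<^sub>m 1\<^sub>m n"
proof -
  have n: "0 < n" and \<rho>: "\<And>g. \<rho> g \<in> carrier_mat n n"
    using irr unitary_rep_carrier unfolding irreducible_rep_def by auto
  obtain \<kappa> where "eigenvalue K \<kappa>"
    using spectrum_non_empty[OF K n] unfolding spectrum_def by auto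
  then obtain v where v: "v \<in> carrier_vec n" "v \<noteq> 0\<^sub>v n" "K *\<^sub>v v = \<kappa> \<cdot>\<^sub>v v"
    using K unfolding eigenvalue_def eigenvector_def by auto
  let ?W = "{u \<in> carrier_vec n. K *\<^sub>v u = \<kappa> \<cdot>\<^sub>v u}"
  have "invariant_subspace n \<rho> ?W" by (rule eigenspace_invariant_subspace[OF \<rho> K comm])
  then have "?W = carrier_vec n" using irr v unfolding irreducible_rep_def by blast
  have "K $$ (i,j) = (\<kappa> \<cdot>\<^sub>m 1\<^sub>m n) $$ (i,j)" if "i < n" "j < n" for i j
  proof -
    have "K $$ (i,j) = (K *\<^sub>v unit_vec n j) $ i" using K that by simp
    also have "K *\<^sub>v unit_vec n j = \<kappa> \<cdot>\<^sub>v unit_vec n j"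
      using \<open>?W = carrier_vec n\<close> unit_vec_carrier by blast
    finally show ?thesis using that by simp
  qed
  then have "K = \<kappa> \<cdot>\<^sub>m 1\<^sub>m n" using K by (intro eq_matI) auto
  then show ?thesis by (rule that)
qed

lemma unitary_intertwiner_adjoint:
  assumes U1: "unitary_mat n1 U1" and U2: "unitary_mat n2 U2"
    and T: "T \<in> carrier_mat n1 n2" and comm: "U1 * T = T * U2"
  shows "U2 * mat_adjoint T = mat_adjoint T * U1"
proof -
  have U1c: "U1 \<in> carrier_mat n1 n1" and U2c: "U2 \<in> carrier_mat n2 n2"
    using U1 U2 unitary_mat_carrier by auto
  have adj: "mat_adjoint T * mat_adjoint U1 = mat_adjoint U2 * mat_adjoint T"
    using arg_cong[OF comm, of mat_adjoint]
    by (simp add: mat_adjoint_mult[OF U1c T] mat_adjoint_mult[OF T U2c])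
  have "mat_adjoint T * U1 = U2 * (mat_adjoint U2 * (mat_adjoint T * U1))"
    by (rule unitary_mat_cancel(2)[OF U2, of "mat_adjoint T * U1" n1, symmetric])
      (rule mult_carrier_mat[OF mat_adjoint_carrier[OF T] U1c])
  also have "mat_adjoint U2 * (mat_adjoint T * U1) = (mat_adjoint T * mat_adjoint U1) * U1"
    using T U1c U2c by (simp add: adj flip: assoc_mult_mat[of _ n2 n2 _ n1 _ n1])
  also have "\<dots> = mat_adjoint T"
    using T U1c unitary_mat_adjoint_mult[OF U1] by (simp add: assoc_mult_mat[of _ n2 n1 _ n1 _ n1])
  finally show ?thesis by simp
qed

lemma intertwiner_mult:
  assumes "X \<in> carrier_mat n1 n1" "Y \<in> carrier_mat n2 n2" "Z \<in> carrier_mat n3 n3"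
    and "S \<in> carrier_mat n1 n2" "T \<in> carrier_mat n2 n3"
    and XS: "X * S = S * Y" and YT: "Y * T = T * Z"
  shows "X * (S * T) = (S * T) * Z"
proof -
  have "X * (S * T) = (S * Y) * T" using assms by (simp flip: XS assoc_mult_mat)
  also have "\<dots> = S * (T * Z)" using assms by (simp flip: YT add: assoc_mult_mat)
  also have "\<dots> = (S * T) * Z" using assms by (simp add: assoc_mult_mat)
  finally show ?thesis .
qed

lemma schur_lemma_isomorphic:
  assumes irr1: "irreducible_rep n1 \<rho>1" and irr2: "irreducible_rep n2 \<rho>2"
    and T: "T \<in> carrier_mat n1 n2" and comm: "\<And>g. \<rho>1 g * T = T * \<rho>2 g" and "T \<noteq> 0\<^sub>m n1 n2"
  shows "rep_isomorphic n2 \<rho>2 n1 \<rho>1"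
proof -
  have rep1: "unitary_rep n1 \<rho>1" and rep2: "unitary_rep n2 \<rho>2"
    using irr1 irr2 unfolding irreducible_rep_def by auto
  note c1 = unitary_rep_carrier[OF rep1] and c2 = unitary_rep_carrier[OF rep2]
  have Tc: "mat_adjoint T \<in> carrier_mat n2 n1" using T by simp
  have adj: "\<rho>2 g * mat_adjoint T = mat_adjoint T * \<rho>1 g" for g
    using unitary_intertwiner_adjoint[OF unitary_rep_unitary[OF rep1] unitary_rep_unitary[OF rep2] T comm] .
  have "mat_adjoint T * T \<in> carrier_mat n2 n2" "T * mat_adjoint T \<in> carrier_mat n1 n1"
    using T by auto
  \<comment> \<open>T^* T and T T^* are self-intertwiners, hence scalars; they agree since T \<noteq> 0, so a
    multiple of T^* inverts T.\<close>
  obtain \<kappa> where \<kappa>: "mat_adjoint T * T = \<kappa> \<cdot>\<^sub>m 1\<^sub>m n2"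
    by (rule schur_lemma_scalar[OF irr2 \<open>mat_adjoint T * T \<in> _\<close> intertwiner_mult[OF c2 c1 c2 Tc T adj comm]])
  obtain \<mu> where \<mu>: "T * mat_adjoint T = \<mu> \<cdot>\<^sub>m 1\<^sub>m n1"
    by (rule schur_lemma_scalar[OF irr1 \<open>T * mat_adjoint T \<in> _\<close> intertwiner_mult[OF c1 c2 c1 T Tc comm adj]])
  have "\<kappa> \<noteq> 0"
    using gram_mat_diag_eq_0_imp_zero[OF T] \<kappa> \<open>T \<noteq> 0\<^sub>m n1 n2\<close> by auto
  obtain i j where ij: "i < n1" "j < n2" "T $$ (i,j) \<noteq> 0"
  proof (rule ccontr)
    assume "\<not> thesis"
    with that have "T = 0\<^sub>m n1 n2" using T by (intro eq_matI) auto
    with \<open>T \<noteq> 0\<^sub>m n1 n2\<close> show False ..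
  qed
  have "T * (mat_adjoint T * T) = (T * mat_adjoint T) * T" by (rule assoc_mult_mat[symmetric, OF T Tc T])
  then have "(T * (\<kappa> \<cdot>\<^sub>m 1\<^sub>m n2)) $$ (i,j) = ((\<mu> \<cdot>\<^sub>m 1\<^sub>m n1) * T) $$ (i,j)" by (simp only: \<kappa> \<mu>)
  then have "\<kappa> * T $$ (i,j) = \<mu> * T $$ (i,j)"
    using T ij by (simp add: mult_smult_distrib[OF T] mult_smult_assoc_mat[OF _ T])
  then have "\<kappa> = \<mu>" using ij(3) by simp
  define T' where "T' = (1 / \<kappa>) \<cdot>\<^sub>m mat_adjoint T"
  have "T' \<in> carrier_mat n2 n1" using T by (simp add: T'_def)
  moreover have "T * T' = 1\<^sub>m n1"
    using \<open>\<kappa> \<noteq> 0\<close> \<open>\<kappa> = \<mu>\<close> \<mu> T unfolding T'_def by (auto simp: mult_smult_distrib[OF T Tc] intro!: eq_matI)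
  moreover have "T' * T = 1\<^sub>m n2"
    using \<open>\<kappa> \<noteq> 0\<close> \<kappa> T unfolding T'_def by (auto simp: mult_smult_assoc_mat[OF Tc T] intro!: eq_matI)
  ultimately show ?thesis
    unfolding rep_isomorphic_def using T comm by (intro exI[of _ T] exI[of _ T']) auto
qed

subsection \<open>Haar integrals and Schur orthogonality\<close>

lemma integral_sum_sum:
  fixes f :: "'a \<Rightarrow> 'b \<Rightarrow> 'c \<Rightarrow> 'd::{banach, second_countable_topology}"
  assumes "finite A" "finite B" "\<And>a b. a \<in> A \<Longrightarrow> b \<in> B \<Longrightarrow> integrable M (f a b)"
  shows "(\<integral>x. (\<Sum>a\<in>A. \<Sum>b\<in>B. f a b x) \<partial>M) = (\<Sum>a\<in>A. \<Sum>b\<in>B. \<integral>x. f a b x \<partial>M)"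
proof -
  have "(\<integral>x. (\<Sum>a\<in>A. \<Sum>b\<in>B. f a b x) \<partial>M) = (\<Sum>a\<in>A. \<integral>x. (\<Sum>b\<in>B. f a b x) \<partial>M)"
    using assms by (intro Bochner_Integration.integral_sum integrable_sum) auto
  also have "\<dots> = (\<Sum>a\<in>A. \<Sum>b\<in>B. \<integral>x. f a b x \<partial>M)"
    using assms by (intro sum.cong refl Bochner_Integration.integral_sum) auto
  finally show ?thesis .
qed

lemma unitary_rep_continuous:
  "unitary_rep n \<rho> \<Longrightarrow> i < n \<Longrightarrow> j < n \<Longrightarrow> continuous_on UNIV (\<lambda>g. \<rho> g $$ (i,j))"
  unfolding unitary_rep_def by blast

lemma unitary_rep_add_index:
  assumes "unitary_rep n \<rho>" "i < n" "a < n"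
  shows "\<rho> (h + g) $$ (i,a) = (\<Sum>c\<in>{0..<n}. \<rho> h $$ (i,c) * \<rho> g $$ (c,a))"
  using assms unitary_rep_carrier[OF assms(1), of h] unitary_rep_carrier[OF assms(1), of g]
  unfolding unitary_rep_def by (simp add: scalar_prod_def)

text \<open>The average of rho1(g) E_ab rho2(g)^* over the group, where E_ab is a matrix unit.\<close>

definition coeff_integral ::
  "'g measure \<Rightarrow> nat \<Rightarrow> ('g \<Rightarrow> complex mat) \<Rightarrow> nat \<Rightarrow> ('g \<Rightarrow> complex mat) \<Rightarrow> nat \<Rightarrow> nat \<Rightarrow> complex mat"
where
  "coeff_integral M n1 \<rho>1 n2 \<rho>2 a b =
     mat n1 n2 (\<lambda>(i,j). \<integral>g. \<rho>1 g $$ (i,a) * cnj (\<rho>2 g $$ (j,b)) \<partial>M)"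

lemma dim_coeff_integral [simp]:
  "dim_row (coeff_integral M n1 \<rho>1 n2 \<rho>2 a b) = n1"
  "dim_col (coeff_integral M n1 \<rho>1 n2 \<rho>2 a b) = n2"
  by (simp_all add: coeff_integral_def)

lemma coeff_integral_carrier [simp]: "coeff_integral M n1 \<rho>1 n2 \<rho>2 a b \<in> carrier_mat n1 n2"
  by (simp add: coeff_integral_def)

locale compact_haar_group =
  fixes M :: "'g::{topological_group_add, t2_space} measure"
  assumes compact_UNIV: "compact (UNIV :: 'g set)"
    and haar: "normalized_haar M"
begin

lemma prob_space_haar: "prob_space M"
  using haar by (simp add: normalized_haar_def)

lemma sets_eq_borel: "sets M = sets borel"
  using haar by (simp add: normalized_haar_def)

lemma continuous_measurable:
  "continuous_on UNIV (f :: 'g \<Rightarrow> 'b::topological_space) \<Longrightarrow> f \<in> borel_measurable M"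
  by (simp add: measurable_cong_sets[OF sets_eq_borel refl] borel_measurable_continuous_onI)

lemma continuous_integrable:
  fixes f :: "'g \<Rightarrow> 'b::{banach, second_countable_topology}"
  assumes "continuous_on UNIV f"
  shows "integrable M f"
proof -
  interpret prob_space M by (rule prob_space_haar)
  obtain B where "\<forall>y\<in>range f. norm y \<le> B"
    using compact_imp_bounded[OF compact_continuous_image[OF assms compact_UNIV]] bounded_iff by metis
  then show ?thesis
    by (intro integrable_const_bound[where B = B] continuous_measurable assms) auto
qed

lemma translation_measurable: "(\<lambda>x. h + x) \<in> measurable M M"
  by (simp add: measurable_cong_sets[OF sets_eq_borel sets_eq_borel]
      borel_measurable_continuous_onI continuous_on_add)

lemma distr_translation: "distr M M (\<lambda>x. h + x) = M"
proof (rule measure_eqI)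
  fix A assume "A \<in> sets (distr M M (\<lambda>x. h + x))"
  then have A: "A \<in> sets M" by simp
  have "(\<lambda>x. h + x) -` A \<inter> space M = (\<lambda>x. - h + x) ` A"
    using sets_eq_imp_space_eq[OF sets_eq_borel] by (force simp: add.assoc[symmetric])
  then have "emeasure (distr M M (\<lambda>x. h + x)) A = emeasure M ((\<lambda>x. - h + x) ` A)"
    using A translation_measurable by (simp add: emeasure_distr)
  also have "\<dots> = emeasure M A" using haar A by (simp add: normalized_haar_def)
  finally show "emeasure (distr M M (\<lambda>x. h + x)) A = emeasure M A" .
qed simp

lemma integral_translation:
  fixes f :: "'g \<Rightarrow> 'b::{banach, second_countable_topology}"
  assumes "f \<in> borel_measurable M"
  shows "(\<integral>x. f (h + x) \<partial>M) = (\<integral>x. f x \<partial>M)"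
proof -
  have "(\<integral>x. f (h + x) \<partial>M) = integral\<^sup>L (distr M M (\<lambda>x. h + x)) f"
    by (rule integral_distr[symmetric, OF translation_measurable assms])
  then show ?thesis by (simp add: distr_translation)
qed

lemma coeff_product_continuous:
  assumes "unitary_rep n1 \<rho>1" "unitary_rep n2 \<rho>2" "i < n1" "a < n1" "j < n2" "b < n2"
  shows "continuous_on UNIV (\<lambda>g. \<rho>1 g $$ (i,a) * cnj (\<rho>2 g $$ (j,b)))"
  using unitary_rep_continuous[OF assms(1,3,4)] unitary_rep_continuous[OF assms(2,5,6)]
  by (intro continuous_intros)

lemma coeff_product_integrable:
  assumes "unitary_rep n1 \<rho>1" "unitary_rep n2 \<rho>2" "i < n1" "a < n1" "j < n2" "b < n2"
  shows "integrable M (\<lambda>g. \<rho>1 g $$ (i,a) * cnj (\<rho>2 g $$ (j,b)))"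
  by (rule continuous_integrable[OF coeff_product_continuous[OF assms]])

lemma coeff_integral_conj_invariant:
  assumes r1: "unitary_rep n1 \<rho>1" and r2: "unitary_rep n2 \<rho>2" and a: "a < n1" and b: "b < n2"
  shows "\<rho>1 h * coeff_integral M n1 \<rho>1 n2 \<rho>2 a b * mat_adjoint (\<rho>2 h) = coeff_integral M n1 \<rho>1 n2 \<rho>2 a b"
    (is "_ * ?T * _ = ?T")
proof (rule eq_matI)
  fix i j assume "i < dim_row ?T" "j < dim_col ?T"
  then have i: "i < n1" and j: "j < n2" by auto
  have "?T $$ (i,j) = (\<integral>g. \<rho>1 g $$ (i,a) * cnj (\<rho>2 g $$ (j,b)) \<partial>M)"
    using i j by (simp add: coeff_integral_def)
  also have "\<dots> = (\<integral>g. \<rho>1 (h + g) $$ (i,a) * cnj (\<rho>2 (h + g) $$ (j,b)) \<partial>M)"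
    by (rule integral_translation[symmetric,
          OF continuous_measurable[OF coeff_product_continuous[OF r1 r2 i a j b]]])
  also have "\<dots> = (\<integral>g. (\<Sum>c\<in>{0..<n1}. \<Sum>d\<in>{0..<n2}. (\<rho>1 h $$ (i,c) * cnj (\<rho>2 h $$ (j,d))) *
      (\<rho>1 g $$ (c,a) * cnj (\<rho>2 g $$ (d,b)))) \<partial>M)"
    unfolding unitary_rep_add_index[OF r1 i a] unitary_rep_add_index[OF r2 j b] cnj_sum sum_product
    by (intro Bochner_Integration.integral_cong sum.cong refl) (simp add: ac_simps)
  also have "\<dots> = (\<Sum>c\<in>{0..<n1}. \<Sum>d\<in>{0..<n2}. (\<rho>1 h $$ (i,c) * cnj (\<rho>2 h $$ (j,d))) * ?T $$ (c,d))"
    using coeff_product_integrable[OF r1 r2 _ a _ b]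
    by (subst integral_sum_sum) (auto simp: coeff_integral_def intro!: sum.cong)
  also have "\<dots> = (\<rho>1 h * ?T * mat_adjoint (\<rho>2 h)) $$ (i,j)"
    using i j unitary_rep_carrier[OF r1, of h] unitary_rep_carrier[OF r2, of h]
    by (simp add: scalar_prod_def sum_distrib_right sum_distrib_left ac_simps) (rule sum.swap)
  finally show "(\<rho>1 h * ?T * mat_adjoint (\<rho>2 h)) $$ (i,j) = ?T $$ (i,j)" by simp
qed (use unitary_rep_carrier[OF r1] unitary_rep_carrier[OF r2] in auto)

lemma coeff_integral_intertwines:
  assumes r1: "unitary_rep n1 \<rho>1" and r2: "unitary_rep n2 \<rho>2" and a: "a < n1" and b: "b < n2"
  shows "\<rho>1 h * coeff_integral M n1 \<rho>1 n2 \<rho>2 a b = coeff_integral M n1 \<rho>1 n2 \<rho>2 a b * \<rho>2 h"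
    (is "_ = ?T * _")
proof -
  have c1: "\<rho>1 h \<in> carrier_mat n1 n1" and c2: "\<rho>2 h \<in> carrier_mat n2 n2"
    using unitary_rep_carrier r1 r2 by auto
  have "?T * \<rho>2 h = (\<rho>1 h * ?T * mat_adjoint (\<rho>2 h)) * \<rho>2 h"
    using coeff_integral_conj_invariant[OF r1 r2 a b, of h] by simp
  also have "\<dots> = (\<rho>1 h * ?T) * (mat_adjoint (\<rho>2 h) * \<rho>2 h)"
    using c1 c2 by (intro assoc_mult_mat) auto
  also have "\<dots> = \<rho>1 h * ?T"
    using c1 by (simp add: unitary_mat_adjoint_mult[OF unitary_rep_unitary[OF r2]])
  finally show ?thesis by simp
qed

lemma coeff_integral_eq_0_if_not_isomorphic:
  assumes irr1: "irreducible_rep n1 \<rho>1" and irr2: "irreducible_rep n2 \<rho>2"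
    and "\<not> rep_isomorphic n2 \<rho>2 n1 \<rho>1" and a: "a < n1" and b: "b < n2"
  shows "coeff_integral M n1 \<rho>1 n2 \<rho>2 a b = 0\<^sub>m n1 n2"
  using assms schur_lemma_isomorphic[OF irr1 irr2 coeff_integral_carrier coeff_integral_intertwines]
  unfolding irreducible_rep_def by blast

lemma coeff_integral_self:
  assumes irr: "irreducible_rep n \<rho>" and a: "a < n" and b: "b < n"
  shows "coeff_integral M n \<rho> n \<rho> a b = (if a = b then 1 / of_nat n else 0) \<cdot>\<^sub>m 1\<^sub>m n"
proof -
  interpret prob_space M by (rule prob_space_haar)
  have r: "unitary_rep n \<rho>" and "0 < n" using irr unfolding irreducible_rep_def by auto
  let ?T = "coeff_integral M n \<rho> n \<rho> a b"
  obtain c where c: "?T = c \<cdot>\<^sub>m 1\<^sub>m n"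
    using schur_lemma_scalar[OF irr coeff_integral_carrier coeff_integral_intertwines[OF r r a b]] .
  have unitary_col: "(\<Sum>i\<in>{0..<n}. \<rho> g $$ (i,a) * cnj (\<rho> g $$ (i,b))) = of_bool (a = b)" for g
    using index_gram_mat[OF unitary_rep_carrier[OF r] b a] unitary_mat_adjoint_mult[OF unitary_rep_unitary[OF r]]
      a b by (auto simp: mult.commute)
  \<comment> \<open>Compute the trace of ?T in two ways; the columns of rho g are orthonormal.\<close>
  have "of_nat n * c = (\<Sum>i\<in>{0..<n}. ?T $$ (i,i))" using c by simp
  also have "\<dots> = (\<integral>g. (\<Sum>i\<in>{0..<n}. \<rho> g $$ (i,a) * cnj (\<rho> g $$ (i,b))) \<partial>M)"
    using coeff_product_integrable[OF r r _ a _ b]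
    by (subst Bochner_Integration.integral_sum) (auto simp: coeff_integral_def)
  also have "\<dots> = of_bool (a = b)"
    using prob_space.prob_space[OF prob_space_haar] by (simp add: unitary_col)
  finally have "c = (if a = b then 1 / of_nat n else 0)" using \<open>0 < n\<close> by (auto simp: field_simps)
  then show ?thesis using c by simp
qed

subsection \<open>The second moment\<close>

lemma moment_integral_expand:
  assumes rl: "unitary_rep (N l) (\<rho> l)" and rk: "unitary_rep (N k) (\<rho> k)"
    and Al: "A l \<in> carrier_mat (N l) (R l)" and Ak: "A k \<in> carrier_mat (N k) (R k)"
    and i: "i < N l" and j: "j < N k" and r: "r < R l" and s: "s < R k"
  shows "(\<integral>g. coord (G_act \<rho> g A) (l,i,r) * cnj (coord (G_act \<rho> g A) (k,j,s)) \<partial>M) =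
    (\<Sum>a\<in>{0..<N l}. \<Sum>b\<in>{0..<N k}.
       A l $$ (a,r) * cnj (A k $$ (b,s)) * coeff_integral M (N l) (\<rho> l) (N k) (\<rho> k) a b $$ (i,j))"
proof -
  have "coord (G_act \<rho> g A) (l,i,r) * cnj (coord (G_act \<rho> g A) (k,j,s)) =
      (\<Sum>a\<in>{0..<N l}. \<Sum>b\<in>{0..<N k}.
         A l $$ (a,r) * cnj (A k $$ (b,s)) * (\<rho> l g $$ (i,a) * cnj (\<rho> k g $$ (j,b))))" for g
    using unitary_rep_carrier[OF rl, of g] unitary_rep_carrier[OF rk, of g] Al Ak i j r s
    by (simp add: coord_def G_act_def scalar_prod_def cnj_sum sum_product)
      (intro sum.cong refl; simp add: ac_simps)
  then have "(\<integral>g. coord (G_act \<rho> g A) (l,i,r) * cnj (coord (G_act \<rho> g A) (k,j,s)) \<partial>M) =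
      (\<integral>g. (\<Sum>a\<in>{0..<N l}. \<Sum>b\<in>{0..<N k}.
         A l $$ (a,r) * cnj (A k $$ (b,s)) * (\<rho> l g $$ (i,a) * cnj (\<rho> k g $$ (j,b)))) \<partial>M)"
    by simp
  also have "\<dots> = (\<Sum>a\<in>{0..<N l}. \<Sum>b\<in>{0..<N k}.
      \<integral>g. A l $$ (a,r) * cnj (A k $$ (b,s)) * (\<rho> l g $$ (i,a) * cnj (\<rho> k g $$ (j,b))) \<partial>M)"
    by (rule integral_sum_sum)
      (auto intro!: integrable_mult_right coeff_product_integrable[OF rl rk i _ j])
  also have "\<dots> = (\<Sum>a\<in>{0..<N l}. \<Sum>b\<in>{0..<N k}.
      A l $$ (a,r) * cnj (A k $$ (b,s)) * coeff_integral M (N l) (\<rho> l) (N k) (\<rho> k) a b $$ (i,j))"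
    using i j by (simp add: coeff_integral_def)
  finally show ?thesis .
qed

lemma moment_integral:
  assumes irr: "\<forall>l<L. irreducible_rep (N l) (\<rho> l)"
    and niso: "\<forall>l<L. \<forall>k<L. l \<noteq> k \<longrightarrow> \<not> rep_isomorphic (N l) (\<rho> l) (N k) (\<rho> k)"
    and A: "in_V L N R A" and "(l,i,r) \<in> V_index L N R" and "(k,j,s) \<in> V_index L N R"
  shows "(\<integral>g. coord (G_act \<rho> g A) (l,i,r) * cnj (coord (G_act \<rho> g A) (k,j,s)) \<partial>M) =
    (if l = k \<and> i = j then cnj ((mat_adjoint (A l) * A l) $$ (r,s)) / of_nat (N l) else 0)"
proof -
  have l: "l < L" "i < N l" "r < R l" and k: "k < L" "j < N k" "s < R k"
    using assms(4,5) by (auto simp: V_index_def)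
  have irr_l: "irreducible_rep (N l) (\<rho> l)" and irr_k: "irreducible_rep (N k) (\<rho> k)"
    using irr l k by auto
  then have rl: "unitary_rep (N l) (\<rho> l)" and rk: "unitary_rep (N k) (\<rho> k)"
    unfolding irreducible_rep_def by auto
  have Al: "A l \<in> carrier_mat (N l) (R l)" and Ak: "A k \<in> carrier_mat (N k) (R k)"
    using A l k unfolding in_V_def by auto
  note expand = moment_integral_expand[OF rl rk Al Ak l(2) k(2) l(3) k(3)]
  show ?thesis
  proof (cases "l = k")
    case False
    then have "coeff_integral M (N l) (\<rho> l) (N k) (\<rho> k) a b = 0\<^sub>m (N l) (N k)"
      if "a < N l" "b < N k" for a b
      using coeff_integral_eq_0_if_not_isomorphic[OF irr_l irr_k _ that] niso l k by auto
    then show ?thesis unfolding expand using l k False by simp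
  next
    case True
    with k have "s < R l" by simp
    have "(\<Sum>a\<in>{0..<N l}. \<Sum>b\<in>{0..<N l}. A l $$ (a,r) * cnj (A l $$ (b,s)) *
        coeff_integral M (N l) (\<rho> l) (N l) (\<rho> l) a b $$ (i,j)) =
        (\<Sum>a\<in>{0..<N l}. \<Sum>b\<in>{0..<N l}. if b = a then
           A l $$ (a,r) * cnj (A l $$ (b,s)) * (of_bool (i = j) / of_nat (N l)) else 0)"
      using coeff_integral_self[OF irr_l] l k True by (intro sum.cong refl) auto
    also have "\<dots> = (\<Sum>a\<in>{0..<N l}. A l $$ (a,r) * cnj (A l $$ (a,s))) * (of_bool (i = j) / of_nat (N l))"
      by (simp add: sum_distrib_right sum_divide_distrib)
    also have "(\<Sum>a\<in>{0..<N l}. A l $$ (a,r) * cnj (A l $$ (a,s))) = cnj ((mat_adjoint (A l) * A l) $$ (r,s))"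
      by (simp add: index_gram_mat[OF Al l(3) \<open>s < R l\<close>] cnj_sum mult.commute)
    finally show ?thesis unfolding expand using True by simp
  qed
qed

lemma second_moment_eq_iff_gram_mat_eq:
  assumes irr: "\<forall>l<L. irreducible_rep (N l) (\<rho> l)"
    and niso: "\<forall>l<L. \<forall>k<L. l \<noteq> k \<longrightarrow> \<not> rep_isomorphic (N l) (\<rho> l) (N k) (\<rho> k)"
    and A: "in_V L N R A" and A': "in_V L N R A'"
  shows "second_moment L N R \<rho> M A = second_moment L N R \<rho> M A' \<longleftrightarrow>
    (\<forall>l<L. mat_adjoint (A l) * A l = mat_adjoint (A' l) * A' l)"
proof
  assume eq: "second_moment L N R \<rho> M A = second_moment L N R \<rho> M A'"
  show "\<forall>l<L. mat_adjoint (A l) * A l = mat_adjoint (A' l) * A' l"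
  proof (intro allI impI)
    fix l assume l: "l < L"
    have Al: "A l \<in> carrier_mat (N l) (R l)" and A'l: "A' l \<in> carrier_mat (N l) (R l)"
      using A A' l unfolding in_V_def by auto
    have "0 < N l" using irr l unfolding irreducible_rep_def by auto
    show "mat_adjoint (A l) * A l = mat_adjoint (A' l) * A' l"
    proof (rule eq_matI)
      fix r s assume "r < dim_row (mat_adjoint (A' l) * A' l)" "s < dim_col (mat_adjoint (A' l) * A' l)"
      then have "(l,0,r) \<in> V_index L N R" "(l,0,s) \<in> V_index L N R"
        using A'l l \<open>0 < N l\<close> by (auto simp: V_index_def)
      moreover have "second_moment L N R \<rho> M A ((l,0,r),(l,0,s)) =
          second_moment L N R \<rho> M A' ((l,0,r),(l,0,s))"
        using eq by simp
      ultimately show "(mat_adjoint (A l) * A l) $$ (r,s) = (mat_adjoint (A' l) * A' l) $$ (r,s)"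
        using \<open>0 < N l\<close>
        by (simp add: second_moment_def moment_integral[OF irr niso A] moment_integral[OF irr niso A'])
    qed (use Al A'l in auto)
  qed
next
  assume gram: "\<forall>l<L. mat_adjoint (A l) * A l = mat_adjoint (A' l) * A' l"
  have "second_moment L N R \<rho> M A (p,q) = second_moment L N R \<rho> M A' (p,q)" for p q
  proof (cases "p \<in> V_index L N R \<and> q \<in> V_index L N R")
    case True
    obtain l i r where p: "p = (l,i,r)" by (rule prod_cases3)
    obtain k j s where q: "q = (k,j,s)" by (rule prod_cases3)
    have "l < L" using True p by (simp add: V_index_def)
    then show ?thesis
      using True gram unfolding p q
      by (simp add: second_moment_def moment_integral[OF irr niso A] moment_integral[OF irr niso A'])
  qed (auto simp: second_moment_def)
  then show "second_moment L N R \<rho> M A = second_moment L N R \<rho> M A'" by auto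
qed

end

theorem theorem2p3:
  fixes M :: "'g::{topological_group_add, t2_space} measure"
    and L :: nat and N R :: "nat \<Rightarrow> nat" and \<rho> :: "nat \<Rightarrow> 'g \<Rightarrow> complex mat"
    and A A' :: "nat \<Rightarrow> complex mat"
  assumes "compact (UNIV :: 'g set)"
    and "normalized_haar M"
    and "\<forall>l<L. irreducible_rep (N l) (\<rho> l)"
    and "\<forall>l<L. \<forall>k<L. l \<noteq> k \<longrightarrow> \<not> rep_isomorphic (N l) (\<rho> l) (N k) (\<rho> k)"
    and "in_V L N R A" and "in_V L N R A'"
  shows "second_moment L N R \<rho> M A = second_moment L N R \<rho> M A' \<longleftrightarrow> H_related L N A A'"
proof -
  interpret compact_haar_group M using assms(1,2) by unfold_locales
  show ?thesis
    using second_moment_eq_iff_gram_mat_eq[OF assms(3-6)] H_related_iff_gram_mat_eq[OF assms(5,6)]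
    by simp
qed

end
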